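(* Let $\Bbbk$ be a field of characteristic $0$ and let $A=\Bbbk\bar Q_1$ be the path algebra of the quiver with vertices $\{1,2\}$ and arrows $t:1\to2$, $s:2\to1$, viewed as an algebra over $B=\Bbbk e_1\oplus\Bbbk e_2$. Any $B$-linear double quasi-Poisson bracket on $A$ which has degree at most $+4$ on generators must be one of the following: Case 1: $\{\!\{s,s\}\!\}=0$, $\{\!\{t,t\}\!\}=0$ and either (1.a) $\{\!\{t,s\}\!\}=\frac\delta2(st\otimes e_1-e_2\otimes ts)$ with $\delta\in\{\pm1\}$, or (1.b) $\{\!\{t,s\}\!\}=\gamma e_2\otimes e_1+\phi\,st\otimes ts+\alpha(st\otimes e_1+e_2\otimes ts)$ with $\alpha,\gamma,\phi\in\Bbbk$, $\alpha^2=\frac14+\gamma\phi$; Case 2: $\{\!\{s,s\}\!\}=0$, $\{\!\{t,t\}\!\}=\lambda(tst\otimes t-t\otimes tst)$ with $\lambda\in\Bbbk^\times$, and $\{\!\{t,s\}\!\}=\frac\delta2(st\otimes e_1-e_2\otimes ts)$ with $\delta\in\{\pm1\}$; Case 3: $\{\!\{t,t\}\!\}=0$, $\{\!\{s,s\}\!\}=\lambda(sts\otimes s-s\otimes sts)$ with $\lambda\in\Bbbk^\times$, and $\{\!\{t,s\}\!\}=\frac\delta2(st\otimes e_1-e_2\otimes ts)$ with $\delta\in\{\pm1\}$.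
   Context: The path algebra is generated by $e_1,e_2,t,s$ with $e_ie_j=\delta_{ij}e_i$, $e_1+e_2=1$, $t=e_1te_2$, $s=e_2se_1$. Grade $A$ by $|s|=|t|=1$ (idempotents in degree 0) and $A\otimes A$ by total degree; "degree at most $+4$ on generators" means each of $\{\!\{s,s\}\!\},\{\!\{t,t\}\!\},\{\!\{t,s\}\!\}$ is a sum of homogeneous terms of degree at most $4$. $\otimes=\otimes_\Bbbk$; Sweedler notation; outer structure $x(d'\otimes d'')y=xd'\otimes d''y$. A $B$-linear double bracket is a $\Bbbk$-bilinear map $A\times A\to A\otimes A$ vanishing when an argument lies in $B$, with $\{\!\{a,b\}\!\}=-\{\!\{b,a\}\!\}''\otimes\{\!\{b,a\}\!\}'$ and $\{\!\{a,bc\}\!\}=\{\!\{a,b\}\!\}c+b\{\!\{a,c\}\!\}$. Triple bracket: $\{\!\{a,b,c\}\!\}=\{\!\{a,\{\!\{b,c\}\!\}'\}\!\}\otimes\{\!\{b,c\}\!\}''+\tau\{\!\{b,\{\!\{c,a\}\!\}'\}\!\}\otimes\{\!\{c,a\}\!\}''+\tau^2\{\!\{c,\{\!\{a,b\}\!\}'\}\!\}\otimes\{\!\{a,b\}\!\}''$, $\tau(x_1\otimes x_2\otimes x_3)=x_3\otimes x_1\otimes x_2$. Quasi-Poisson: $\{\!\{a,b,c\}\!\}=\frac14\sum_{r=1,2}(ce_ra\otimes e_rb\otimes e_r-ce_ra\otimes e_r\otimes be_r-ce_r\otimes ae_rb\otimes e_r+ce_r\otimes ae_r\otimes be_r-e_ra\otimes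 e_rb\otimes e_rc+e_ra\otimes e_r\otimes be_rc+e_r\otimes ae_rb\otimes e_rc-e_r\otimes ae_r\otimes be_rc)$ for all $a,b,c$. *)

theory Defs
  imports Main
begin

text \<open>Path algebra of the quiver with vertices 1,2 and arrows t : 1 -> 2, s : 2 -> 1,
  with convention t = e1 t e2, s = e2 s e1.  A nonzero path is determined by its
  left vertex (True = vertex 1, False = vertex 2) and its length: length 0 gives e_i,
  otherwise it is the alternating word starting with t (left vertex 1) or s (left vertex 2).
  Elements of A are finitely supported coefficient functions on paths; elements of
  A (x) A, resp. A (x) A (x) A, are finitely supported coefficient functions on pairs,
  resp. triples, of paths.\<close>

type_synonym path = "bool \<times> nat"

definition rv :: "bool \<Rightarrow> nat \<Rightarrow> bool" where
  "rv b n = (if even n then b else \<not> b)"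

definition pmul :: "(path \<Rightarrow> 'k::comm_ring_1) \<Rightarrow> (path \<Rightarrow> 'k) \<Rightarrow> path \<Rightarrow> 'k" where
  "pmul x y = (\<lambda>(b, n). \<Sum>k\<in>{0..n}. x (b, k) * y (rv b k, n - k))"

definition bas :: "path \<Rightarrow> path \<Rightarrow> 'k::comm_ring_1" where
  "bas p = (\<lambda>q. if q = p then 1 else 0)"

definition qe1 :: "path \<Rightarrow> 'k::comm_ring_1" where "qe1 = bas (True, 0)"
definition qe2 :: "path \<Rightarrow> 'k::comm_ring_1" where "qe2 = bas (False, 0)"
definition qt :: "path \<Rightarrow> 'k::comm_ring_1" where "qt = bas (True, 1)"
definition qs :: "path \<Rightarrow> 'k::comm_ring_1" where "qs = bas (False, 1)"

definition finsupp :: "('a \<Rightarrow> 'k::zero) \<Rightarrow> bool" where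
  "finsupp x = finite {p. x p \<noteq> 0}"

definition inB :: "(path \<Rightarrow> 'k::zero) \<Rightarrow> bool" where
  "inB x = (\<forall>p. snd p \<noteq> 0 \<longrightarrow> x p = 0)"

definition tens2 :: "(path \<Rightarrow> 'k::comm_ring_1) \<Rightarrow> (path \<Rightarrow> 'k) \<Rightarrow> path \<times> path \<Rightarrow> 'k" where
  "tens2 x y = (\<lambda>(p, q). x p * y q)"

definition tens3 :: "(path \<Rightarrow> 'k::comm_ring_1) \<Rightarrow> (path \<Rightarrow> 'k) \<Rightarrow> (path \<Rightarrow> 'k)
    \<Rightarrow> path \<times> path \<times> path \<Rightarrow> 'k" where
  "tens3 x y z = (\<lambda>(p, q, r). x p * y q * z r)"

text \<open>Outer bimodule structure on A (x) A: x (d' (x) d'') y = x d' (x) d'' y.\<close>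
definition lmul2 :: "(path \<Rightarrow> 'k::comm_ring_1) \<Rightarrow> (path \<times> path \<Rightarrow> 'k) \<Rightarrow> path \<times> path \<Rightarrow> 'k" where
  "lmul2 b D = (\<lambda>(p, q). pmul b (\<lambda>r. D (r, q)) p)"

definition rmul2 :: "(path \<times> path \<Rightarrow> 'k::comm_ring_1) \<Rightarrow> (path \<Rightarrow> 'k) \<Rightarrow> path \<times> path \<Rightarrow> 'k" where
  "rmul2 D c = (\<lambda>(p, q). pmul (\<lambda>r. D (p, r)) c q)"

type_synonym 'k dbr = "(path \<Rightarrow> 'k) \<Rightarrow> (path \<Rightarrow> 'k) \<Rightarrow> path \<times> path \<Rightarrow> 'k"

definition double_bracket :: "'k::field dbr \<Rightarrow> bool" where
  "double_bracket br \<longleftrightarrow>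
     (\<forall>a b. finsupp a \<longrightarrow> finsupp b \<longrightarrow> finsupp (br a b)) \<and>
     (\<forall>a a' b. finsupp a \<longrightarrow> finsupp a' \<longrightarrow> finsupp b \<longrightarrow>
        br (\<lambda>p. a p + a' p) b = (\<lambda>x. br a b x + br a' b x)) \<and>
     (\<forall>a b b'. finsupp a \<longrightarrow> finsupp b \<longrightarrow> finsupp b' \<longrightarrow>
        br a (\<lambda>p. b p + b' p) = (\<lambda>x. br a b x + br a b' x)) \<and>
     (\<forall>c a b. finsupp a \<longrightarrow> finsupp b \<longrightarrow> br (\<lambda>p. c * a p) b = (\<lambda>x. c * br a b x)) \<and>
     (\<forall>c a b. finsupp a \<longrightarrow> finsupp b \<longrightarrow> br a (\<lambda>p. c * b p) = (\<lambda>x. c * br a b x)) \<and>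
     (\<forall>a b. finsupp a \<longrightarrow> finsupp b \<longrightarrow> inB a \<longrightarrow> br a b = (\<lambda>x. 0)) \<and>
     (\<forall>a b. finsupp a \<longrightarrow> finsupp b \<longrightarrow> inB b \<longrightarrow> br a b = (\<lambda>x. 0)) \<and>
     (\<forall>a b. finsupp a \<longrightarrow> finsupp b \<longrightarrow> br a b = (\<lambda>(p, q). - br b a (q, p))) \<and>
     (\<forall>a b c. finsupp a \<longrightarrow> finsupp b \<longrightarrow> finsupp c \<longrightarrow>
        br a (pmul b c) = (\<lambda>x. rmul2 (br a b) c x + lmul2 b (br a c) x))"

text \<open>The Sweedler expression {{a,{{b,c}}'}} (x) {{b,c}}'' is evaluated
  coordinatewise: for each basis path r of the last factor, the coefficient of r is
  {{a, x_r}} with x_r the element u |-> {{b,c}}(u,r) (this is the bilinear extension).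
  tau(x1 (x) x2 (x) x3) = x3 (x) x1 (x) x2.\<close>
definition triple :: "'k::field dbr \<Rightarrow> (path \<Rightarrow> 'k) \<Rightarrow> (path \<Rightarrow> 'k) \<Rightarrow> (path \<Rightarrow> 'k)
    \<Rightarrow> path \<times> path \<times> path \<Rightarrow> 'k" where
  "triple br a b c = (\<lambda>(p, q, r).
      br a (\<lambda>u. br b c (u, r)) (p, q)
    + br b (\<lambda>u. br c a (u, p)) (q, r)
    + br c (\<lambda>u. br a b (u, q)) (r, p))"

definition qpt :: "(path \<Rightarrow> 'k::field) \<Rightarrow> (path \<Rightarrow> 'k) \<Rightarrow> (path \<Rightarrow> 'k) \<Rightarrow> (path \<Rightarrow> 'k)
    \<Rightarrow> path \<times> path \<times> path \<Rightarrow> 'k" where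
  "qpt e a b c = (\<lambda>x.
       tens3 (pmul (pmul c e) a) (pmul e b) e x
     - tens3 (pmul (pmul c e) a) e (pmul b e) x
     - tens3 (pmul c e) (pmul (pmul a e) b) e x
     + tens3 (pmul c e) (pmul a e) (pmul b e) x
     - tens3 (pmul e a) (pmul e b) (pmul e c) x
     + tens3 (pmul e a) e (pmul (pmul b e) c) x
     + tens3 e (pmul (pmul a e) b) (pmul e c) x
     - tens3 e (pmul a e) (pmul (pmul b e) c) x)"

definition quasi_Poisson :: "'k::field dbr \<Rightarrow> bool" where
  "quasi_Poisson br \<longleftrightarrow> double_bracket br \<and>
     (\<forall>a b c. finsupp a \<longrightarrow> finsupp b \<longrightarrow> finsupp c \<longrightarrow>
        triple br a b c = (\<lambda>x. (1/4) * (qpt qe1 a b c x + qpt qe2 a b c x)))"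

definition deg_le4_on_gens :: "'k::field dbr \<Rightarrow> bool" where
  "deg_le4_on_gens br \<longleftrightarrow>
     (\<forall>(x, y) \<in> {(qs, qs), (qt, qt), (qt, qs)}.
        \<forall>p q. br x y (p, q) \<noteq> 0 \<longrightarrow> snd p + snd q \<le> 4)"

end

theory Submission
  imports Defs
begin

(*
  Applying the Leibniz rule to products with the idempotents e1, e2 (whose brackets vanish)
  shows that the bracket of the paths e_i a e_j and e_k b e_l lies in e_k A e_j (x) e_i A e_l.
  Together with the degree bound this leaves six coefficients for {{t,s}}, on e2 (x) e1,
  st (x) e1, e2 (x) ts, st (x) ts, stst (x) e1 and e2 (x) tsts, and one coefficient each for
  {{t,t}} and {{s,s}}, on tst (x) t - t (x) tst and sts (x) s - s (x) sts; the t (x) t and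
  s (x) s terms are killed by antisymmetry.  By the Leibniz rule the bracket of a generator
  with any path is then determined, so evaluating the quasi-Poisson identity for (t,t,s) and
  (t,s,s) at a handful of triples of paths gives polynomial equations in the eight
  coefficients, whose solutions are exactly the listed cases.
*)

section \<open>Paths\<close>

lemma rv_0 [simp]: "rv b 0 = b"
  by (simp add: rv_def)

lemma rv_True [simp]: "rv True n = even n"
  and rv_False [simp]: "rv False n = odd n"
  by (simp_all add: rv_def)

lemma bas_apply: "bas u v = (if v = u then 1 else 0)"
  by (simp add: bas_def)

lemma pmul_bas_left:
  "pmul (bas (c, m)) y (b, n) = (if b = c \<and> m \<le> n then y (rv c m, n - m) else 0)"
proof -
  have "pmul (bas (c, m)) y (b, n) =
      (\<Sum>k\<in>{0..n}. if k = m then (if b = c then y (rv b m, n - m) else 0) else 0)"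
    unfolding pmul_def bas_def prod.case by (intro sum.cong) auto
  then show ?thesis by auto
qed

lemma pmul_bas_right:
  "pmul y (bas (c, m)) (b, n) = (if m \<le> n \<and> rv b (n - m) = c then y (b, n - m) else 0)"
proof -
  have "pmul y (bas (c, m)) (b, n) =
      (\<Sum>k\<in>{0..n}. if k = n - m
        then (if m \<le> n \<and> rv b (n - m) = c then y (b, n - m) else 0) else 0)"
    unfolding pmul_def bas_def prod.case by (intro sum.cong) auto
  then show ?thesis by auto
qed

lemma pmul_bas_bas:
  "pmul (bas (b, n)) (bas (c, m)) = (if rv b n = c then bas (b, n + m) else (\<lambda>_. 0))"
proof
  fix x :: path
  show "pmul (bas (b, n)) (bas (c, m)) x = (if rv b n = c then bas (b, n + m) else (\<lambda>_. 0)) x"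
    by (cases x) (simp only: pmul_bas_left; auto simp: bas_def rv_def)
qed

lemma pmul_zero_left [simp]: "pmul (\<lambda>_. 0) y = (\<lambda>_. 0)"
  by (simp add: pmul_def fun_eq_iff)

lemma lmul2_bas:
  "lmul2 (bas (c, m)) D ((b, n), q) = (if b = c \<and> m \<le> n then D ((rv c m, n - m), q) else 0)"
  by (simp add: lmul2_def pmul_bas_left)

lemma rmul2_bas:
  "rmul2 D (bas (c, m)) (p, (b, n)) = (if m \<le> n \<and> rv b (n - m) = c then D (p, (b, n - m)) else 0)"
  by (simp add: rmul2_def pmul_bas_right)

lemma finsupp_subset: "{p. x p \<noteq> 0} \<subseteq> U \<Longrightarrow> finite U \<Longrightarrow> finsupp x"
  unfolding finsupp_def by (rule finite_subset)

lemma finsupp_zero: "finsupp (\<lambda>p. 0)"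
  by (simp add: finsupp_def)

lemma finsupp_smult_bas: "finsupp (\<lambda>p. c * bas u p)"
  by (rule finsupp_subset[of _ "{u}"]) (auto simp: bas_def)

lemma finsupp_bas: "finsupp (bas u)"
  using finsupp_smult_bas[of 1 u] by simp

lemma finsupp_qt: "finsupp qt" and finsupp_qs: "finsupp qs"
  by (simp_all add: qt_def qs_def finsupp_bas)

lemma inB_zero: "inB (\<lambda>p. 0)"
  by (simp add: inB_def)

lemma inB_vertex: "inB (bas (b, 0))"
  by (auto simp: inB_def bas_def)

section \<open>Finite sums of tensors of paths\<close>

definition tensor_sum :: "('k::comm_ring_1 \<times> path \<times> path) list \<Rightarrow> path \<times> path \<Rightarrow> 'k" where
  "tensor_sum xs = (\<lambda>(p, q). \<Sum>(c, u, v)\<leftarrow>xs. c * bas u p * bas v q)"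

lemma tensor_sum_Nil [simp]: "tensor_sum [] = (\<lambda>_. 0)"
  by (simp add: tensor_sum_def fun_eq_iff)

lemma tensor_sum_Cons:
  "tensor_sum ((c, u, v) # xs) (p, q) = c * bas u p * bas v q + tensor_sum xs (p, q)"
  by (simp add: tensor_sum_def)

lemma finsupp_tensor_sum_slice: "finsupp (\<lambda>u. tensor_sum xs (u, r))"
proof (induction xs)
  case Nil
  then show ?case by (simp add: finsupp_zero)
next
  case (Cons x xs)
  obtain c u v where x: "x = (c, u, v)" by (cases x)
  have "{w. tensor_sum (x # xs) (w, r) \<noteq> 0} \<subseteq> {u} \<union> {w. tensor_sum xs (w, r) \<noteq> 0}"
    by (auto simp: x tensor_sum_Cons bas_def)
  then show ?case using Cons by (auto simp: finsupp_def intro: finite_subset)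
qed

lemma tensor_sum_of_support:
  assumes "distinct ps" and "\<And>z. D z \<noteq> 0 \<Longrightarrow> z \<in> set ps"
  shows "D = tensor_sum (map (\<lambda>(u, v). (D (u, v), u, v)) ps)"
proof (rule ext, clarify)
  fix p q
  have "tensor_sum (map (\<lambda>(u, v). (D (u, v), u, v)) ps) (p, q) =
      (\<Sum>z\<in>set ps. if z = (p, q) then D z else 0)"
    unfolding tensor_sum_def
    by (auto simp: sum_list_distinct_conv_sum_set assms(1) comp_def case_prod_beta bas_def
        prod_eq_iff intro!: sum.cong)
  also have "\<dots> = D (p, q)"
    using assms(2)[of "(p, q)"] by auto
  finally show "D (p, q) = tensor_sum (map (\<lambda>(u, v). (D (u, v), u, v)) ps) (p, q)" ..
qed

lemma tensor_sum_swap: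
  "tensor_sum (map (\<lambda>(c, u, v). (- c, v, u)) xs) (p, q) = - tensor_sum xs (q, p)"
  by (induction xs) (auto simp: tensor_sum_Cons)

section \<open>Double brackets of paths\<close>

context
  fixes br :: "'k::field dbr"
  assumes db: "double_bracket br"
begin

lemma bracket_add_right:
  "finsupp a \<Longrightarrow> finsupp b \<Longrightarrow> finsupp b' \<Longrightarrow>
    br a (\<lambda>p. b p + b' p) = (\<lambda>x. br a b x + br a b' x)"
  using db unfolding double_bracket_def by meson

lemma bracket_smult_right:
  "finsupp a \<Longrightarrow> finsupp b \<Longrightarrow> br a (\<lambda>p. c * b p) = (\<lambda>x. c * br a b x)"
  using db unfolding double_bracket_def by meson

lemma bracket_inB_right: "finsupp a \<Longrightarrow> finsupp b \<Longrightarrow> inB b \<Longrightarrow> br a b = (\<lambda>x. 0)"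
  using db unfolding double_bracket_def by meson

lemma bracket_antisym:
  assumes "finsupp a" "finsupp b"
  shows "br a b (p, q) = - br b a (q, p)"
proof -
  have "br a b = (\<lambda>(p, q). - br b a (q, p))"
    using db assms unfolding double_bracket_def by meson
  then show ?thesis by simp
qed

lemma bracket_Leibniz:
  "finsupp a \<Longrightarrow> finsupp b \<Longrightarrow> finsupp c \<Longrightarrow>
    br a (pmul b c) = (\<lambda>x. rmul2 (br a b) c x + lmul2 b (br a c) x)"
  using db unfolding double_bracket_def by meson

lemma bracket_vertex: "finsupp a \<Longrightarrow> br a (bas (b, 0)) = (\<lambda>x. 0)"
  by (rule bracket_inB_right) (simp_all add: finsupp_bas inB_vertex)

lemma bracket_tensor_sum_slice:
  assumes "finsupp a"
  shows "br a (\<lambda>u. tensor_sum xs (u, r)) =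
    (\<lambda>z. \<Sum>(c, u, v)\<leftarrow>xs. c * bas v r * br a (bas u) z)"
proof (induction xs)
  case Nil
  show ?case using bracket_inB_right[OF assms finsupp_zero inB_zero] by simp
next
  case (Cons x xs)
  obtain c u v where x: "x = (c, u, v)" by (cases x)
  have "br a (\<lambda>w. tensor_sum (x # xs) (w, r))
      = br a (\<lambda>w. (c * bas v r) * bas u w + tensor_sum xs (w, r))"
    by (simp add: x tensor_sum_Cons mult_ac)
  also have "\<dots> = (\<lambda>z. c * bas v r * br a (bas u) z + br a (\<lambda>w. tensor_sum xs (w, r)) z)"
    by (simp add: bracket_add_right bracket_smult_right assms finsupp_smult_bas finsupp_bas
        finsupp_tensor_sum_slice)
  finally show ?case using Cons by (simp add: x)
qed

lemma bracket_left_vertex: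
  assumes a: "finsupp a" and nz: "br a (bas (c, m)) ((b, n), q) \<noteq> 0"
  shows "b = c"
proof (rule ccontr)
  assume "b \<noteq> c"
  have "br a (bas (c, m)) = br a (pmul (bas (c, 0)) (bas (c, m)))"
    by (simp add: pmul_bas_bas)
  also have "\<dots> = (\<lambda>x. rmul2 (br a (bas (c, 0))) (bas (c, m)) x
      + lmul2 (bas (c, 0)) (br a (bas (c, m))) x)"
    by (rule bracket_Leibniz[OF a finsupp_bas finsupp_bas])
  finally have "br a (bas (c, m)) ((b, n), q) =
      rmul2 (br a (bas (c, 0))) (bas (c, m)) ((b, n), q)
      + lmul2 (bas (c, 0)) (br a (bas (c, m))) ((b, n), q)"
    by (rule fun_cong)
  also have "\<dots> = 0"
    using \<open>b \<noteq> c\<close> by (simp add: bracket_vertex[OF a] rmul2_def pmul_def lmul2_bas)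
  finally show False using nz by contradiction
qed

lemma bracket_right_vertex:
  assumes a: "finsupp a" and nz: "br a (bas (c, m)) (p, (b, n)) \<noteq> 0"
  shows "rv b n = rv c m"
proof (rule ccontr)
  assume "rv b n \<noteq> rv c m"
  have "br a (bas (c, m)) = br a (pmul (bas (c, m)) (bas (rv c m, 0)))"
    by (simp add: pmul_bas_bas)
  also have "\<dots> = (\<lambda>x. rmul2 (br a (bas (c, m))) (bas (rv c m, 0)) x
      + lmul2 (bas (c, m)) (br a (bas (rv c m, 0))) x)"
    by (rule bracket_Leibniz[OF a finsupp_bas finsupp_bas])
  finally have "br a (bas (c, m)) (p, (b, n)) =
      rmul2 (br a (bas (c, m))) (bas (rv c m, 0)) (p, (b, n))
      + lmul2 (bas (c, m)) (br a (bas (rv c m, 0))) (p, (b, n))"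
    by (rule fun_cong)
  also have "\<dots> = 0"
    using \<open>rv b n \<noteq> rv c m\<close> by (simp add: bracket_vertex[OF a] lmul2_def pmul_def rmul2_bas)
  finally show False using nz by contradiction
qed

lemma bracket_paths_vertices:
  assumes "br (bas (c, k)) (bas (d, l)) ((x, n), (y, m)) \<noteq> 0"
  shows "x = d \<and> rv y m = rv d l \<and> y = c \<and> rv x n = rv c k"
proof -
  have "br (bas (c, k)) (bas (d, l)) ((x, n), (y, m)) = - br (bas (d, l)) (bas (c, k)) ((y, m), (x, n))"
    by (rule bracket_antisym[OF finsupp_bas finsupp_bas])
  with assms have swapped: "br (bas (d, l)) (bas (c, k)) ((y, m), (x, n)) \<noteq> 0"
    by simp
  show ?thesis
    using bracket_left_vertex[OF finsupp_bas assms] bracket_right_vertex[OF finsupp_bas assms]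
      bracket_left_vertex[OF finsupp_bas swapped] bracket_right_vertex[OF finsupp_bas swapped]
    by (intro conjI)
qed

(* Peels the first arrow off a path; the hypothesis 1 < n makes it a terminating simp rule. *)
lemma bracket_path_Leibniz:
  assumes a: "finsupp a" and n: "1 < n"
  shows "br a (bas (b, n)) ((x, k), (y, l)) =
    (if n - 1 \<le> l \<and> rv y (l - (n - 1)) = (\<not> b)
     then br a (bas (b, 1)) ((x, k), (y, l - (n - 1))) else 0)
    + (if x = b \<and> 1 \<le> k then br a (bas (\<not> b, n - 1)) ((\<not> b, k - 1), (y, l)) else 0)"
proof -
  have factor: "pmul (bas (b, 1)) (bas (\<not> b, n - 1)) = bas (b, n)"
    using n by (simp add: pmul_bas_bas rv_def)
  have "br a (bas (b, n)) = br a (pmul (bas (b, 1)) (bas (\<not> b, n - 1)))"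
    by (simp only: factor)
  also have "\<dots> = (\<lambda>z. rmul2 (br a (bas (b, 1))) (bas (\<not> b, n - 1)) z
      + lmul2 (bas (b, 1)) (br a (bas (\<not> b, n - 1))) z)"
    by (rule bracket_Leibniz[OF a finsupp_bas finsupp_bas])
  finally have "br a (bas (b, n)) ((x, k), (y, l)) =
      rmul2 (br a (bas (b, 1))) (bas (\<not> b, n - 1)) ((x, k), (y, l))
      + lmul2 (bas (b, 1)) (br a (bas (\<not> b, n - 1))) ((x, k), (y, l))"
    by (rule fun_cong)
  then show ?thesis
    by (simp only: rmul2_bas lmul2_bas) (simp add: rv_def)
qed

lemma bracket_swap_tensor_sum:
  assumes "finsupp a" "finsupp b" "br a b = tensor_sum xs"
  shows "br b a = tensor_sum (map (\<lambda>(c, u, v). (- c, v, u)) xs)"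
proof (rule ext, clarify)
  fix p q
  show "br b a (p, q) = tensor_sum (map (\<lambda>(c, u, v). (- c, v, u)) xs) (p, q)"
    using bracket_antisym[OF assms(2,1)] by (simp add: tensor_sum_swap assms(3))
qed

lemma triple_tensor_sums:
  assumes fin: "finsupp a" "finsupp b" "finsupp c"
    and bc: "br b c = tensor_sum xs" and ca: "br c a = tensor_sum ys" and ab: "br a b = tensor_sum zs"
  shows "triple br a b c (p, q, r) =
      (\<Sum>(k, u, v)\<leftarrow>xs. k * bas v r * br a (bas u) (p, q))
    + (\<Sum>(k, u, v)\<leftarrow>ys. k * bas v p * br b (bas u) (q, r))
    + (\<Sum>(k, u, v)\<leftarrow>zs. k * bas v q * br c (bas u) (r, p))"
  by (simp add: triple_def bc ca ab bracket_tensor_sum_slice fin)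

end

section \<open>Brackets of the generators\<close>

lemma deg_le4_on_gensD:
  assumes "deg_le4_on_gens br"
  shows "br qt qs (p, q) \<noteq> 0 \<Longrightarrow> snd p + snd q \<le> 4"
    and "br qt qt (p, q) \<noteq> 0 \<Longrightarrow> snd p + snd q \<le> 4"
    and "br qs qs (p, q) \<noteq> 0 \<Longrightarrow> snd p + snd q \<le> 4"
  using assms unfolding deg_le4_on_gens_def by blast+

lemma bracket_ts_normal_form:
  fixes br :: "'k::field dbr"
  assumes db: "double_bracket br"
    and deg: "\<And>p q. br qt qs (p, q) \<noteq> 0 \<Longrightarrow> snd p + snd q \<le> 4"
  shows "\<exists>g a1 a2 f b1 b2. br qt qs = tensor_sum [(g, (False, 0), (True, 0)),
    (a1, (False, 2), (True, 0)), (a2, (False, 0), (True, 2)), (f, (False, 2), (True, 2)),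
    (b1, (False, 4), (True, 0)), (b2, (False, 0), (True, 4))]"
proof -
  let ?ps = "[((False, 0), (True, 0)), ((False, 2), (True, 0)), ((False, 0), (True, 2)),
    ((False, 2), (True, 2)), ((False, 4), (True, 0)), ((False, 0), (True, 4))]"
  have "br qt qs = tensor_sum (map (\<lambda>(u, v). (br qt qs (u, v), u, v)) ?ps)"
  proof (rule tensor_sum_of_support)
    fix z
    assume nz: "br qt qs z \<noteq> 0"
    obtain x n y m where z: "z = ((x, n), (y, m))"
      by (metis prod.exhaust)
    have "x = False" "y = True" "even n" "even m"
      using bracket_paths_vertices[OF db nz[unfolded z qt_def qs_def]] by auto
    moreover have "n + m \<le> 4"
      using deg[of "(x, n)" "(y, m)"] nz by (simp add: z)
    ultimately have "x = False" "y = True" and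
      "n = 0 \<and> m = 0 \<or> n = 2 \<and> m = 0 \<or> n = 0 \<and> m = 2 \<or> n = 2 \<and> m = 2
        \<or> n = 4 \<and> m = 0 \<or> n = 0 \<and> m = 4"
      by presburger+
    then show "z \<in> set ?ps"
      by (auto simp: z)
  qed simp
  then show ?thesis
    by (simp only: list.map prod.case) blast
qed

lemma bracket_self_normal_form:
  fixes br :: "'k::field_char_0 dbr"
  assumes db: "double_bracket br"
    and deg: "\<And>p q. br (bas (c, 1)) (bas (c, 1)) (p, q) \<noteq> 0 \<Longrightarrow> snd p + snd q \<le> 4"
  shows "\<exists>L. br (bas (c, 1)) (bas (c, 1)) = tensor_sum [(L, (c, 3), (c, 1)), (- L, (c, 1), (c, 3))]"
proof -
  let ?a = "bas (c, 1) :: path \<Rightarrow> 'k"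
  have anti: "br ?a ?a (p, q) = - br ?a ?a (q, p)" for p q
    by (rule bracket_antisym[OF db finsupp_bas finsupp_bas])
  have "br ?a ?a =
      tensor_sum (map (\<lambda>(u, v). (br ?a ?a (u, v), u, v)) [((c, 3), (c, 1)), ((c, 1), (c, 3))])"
  proof (rule tensor_sum_of_support)
    fix z
    assume nz: "br ?a ?a z \<noteq> 0"
    obtain x n y m where z: "z = ((x, n), (y, m))"
      by (metis prod.exhaust)
    have "x = c" "y = c" "odd n" "odd m"
      using bracket_paths_vertices[OF db nz[unfolded z]] by (auto simp: rv_def split: if_splits)
    moreover have "n + m \<le> 4"
      using deg[of "(x, n)" "(y, m)"] nz by (simp add: z)
    moreover have "\<not> (n = 1 \<and> m = 1)"
      using nz anti[of "(c, 1)" "(c, 1)"] by (auto simp: z \<open>x = c\<close> \<open>y = c\<close>)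
    ultimately have "x = c" "y = c" and "n = 3 \<and> m = 1 \<or> n = 1 \<and> m = 3"
      by presburger+
    then show "z \<in> set [((c, 3), (c, 1)), ((c, 1), (c, 3))]"
      by (auto simp: z)
  qed simp
  then show ?thesis
    using anti[of "(c, 1)" "(c, 3)"] by auto
qed

section \<open>The quasi-Poisson equations\<close>

lemma quasi_PoissonD:
  "quasi_Poisson br \<Longrightarrow> finsupp a \<Longrightarrow> finsupp b \<Longrightarrow> finsupp c \<Longrightarrow>
    triple br a b c x = (1/4) * (qpt qe1 a b c x + qpt qe2 a b c x)"
  unfolding quasi_Poisson_def by meson

lemma quasi_Poisson_coefficient_equations:
  fixes br :: "'k::field_char_0 dbr"
  assumes qp: "quasi_Poisson br"
    and ts: "br qt qs = tensor_sum [(g, (False, 0), (True, 0)), (a1, (False, 2), (True, 0)),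
      (a2, (False, 0), (True, 2)), (f, (False, 2), (True, 2)), (b1, (False, 4), (True, 0)),
      (b2, (False, 0), (True, 4))]"
    and tt: "br qt qt = tensor_sum [(L, (True, 3), (True, 1)), (- L, (True, 1), (True, 3))]"
    and ss: "br qs qs = tensor_sum [(M, (False, 3), (False, 1)), (- M, (False, 1), (False, 3))]"
  shows "b1 = 0" "b2 = 0" "L * M = 0" "L * g = 0" "M * g = 0" "g * (a1 - a2) = 0"
    "a1\<^sup>2 = 1/4 + g * f + L * g" "a2\<^sup>2 = 1/4 + g * f - L * g"
    "(a1 - a2) * f = L * (a1 + a2)" "(a1 - a2) * f = M * (a1 + a2)"
proof -
  have db: "double_bracket br"
    using qp by (simp add: quasi_Poisson_def)
  note ts' = ts[unfolded qt_def qs_def] and tt' = tt[unfolded qt_def] and ss' = ss[unfolded qs_def]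
  note st = bracket_swap_tensor_sum[OF db finsupp_bas finsupp_bas ts']
  note triple = triple_tensor_sums[OF db finsupp_bas finsupp_bas finsupp_bas]
  \<comment> \<open>The simplifier turns the numeral \<open>1 :: nat\<close> into \<open>Suc 0\<close>, so the equations for the
    brackets of generators only fire after being simplified themselves.\<close>
  note ev = tensor_sum_Cons bas_apply bracket_path_Leibniz[OF db finsupp_bas]
    bracket_vertex[OF db finsupp_bas] qpt_def tens3_def pmul_bas_bas qe1_def qe2_def
    ts'[simplified] tt'[simplified] ss'[simplified] st[simplified]
  have tts: "triple br qt qt qs (p, q, r) = (1/4) * (qpt qe1 qt qt qs (p, q, r) + qpt qe2 qt qt qs (p, q, r))"
    for p q r by (rule quasi_PoissonD[OF qp finsupp_qt finsupp_qt finsupp_qs])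
  note tts = tts[unfolded qt_def qs_def triple[OF ts' st tt']]
  have tss: "triple br qt qs qs (p, q, r) = (1/4) * (qpt qe1 qt qs qs (p, q, r) + qpt qe2 qt qs qs (p, q, r))"
    for p q r by (rule quasi_PoissonD[OF qp finsupp_qt finsupp_qs finsupp_qs])
  note tss = tss[unfolded qt_def qs_def triple[OF ss' st ts']]
  show b1: "b1 = 0"
    using tts[where p = "(False, 6)" and q = "(True, 1)" and r = "(True, 0)"]
    by (simp add: ev algebra_simps)
  show b2: "b2 = 0"
    using tts[where p = "(False, 0)" and q = "(True, 1)" and r = "(True, 6)"]
    by (simp add: ev algebra_simps)
  note ev = ev b1 b2
  show "L * M = 0"
    using tts[where p = "(False, 2)" and q = "(True, 1)" and r = "(True, 4)"]
    by (simp add: ev algebra_simps)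
  show "L * g = 0"
    using tts[where p = "(False, 0)" and q = "(True, 3)" and r = "(True, 0)"]
    by (simp add: ev algebra_simps)
  show "M * g = 0"
    using tss[where p = "(False, 0)" and q = "(True, 0)" and r = "(False, 3)"]
    by (simp add: ev algebra_simps)
  show "g * (a1 - a2) = 0"
    using tts[where p = "(False, 0)" and q = "(True, 1)" and r = "(True, 0)"]
    by (simp add: ev algebra_simps)
  show "a1\<^sup>2 = 1/4 + g * f + L * g"
    using tts[where p = "(False, 2)" and q = "(True, 1)" and r = "(True, 0)"]
    by (simp add: ev algebra_simps power2_eq_square; simp add: field_simps)
  show "a2\<^sup>2 = 1/4 + g * f - L * g"
    using tts[where p = "(False, 0)" and q = "(True, 1)" and r = "(True, 2)"]
    by (simp add: ev algebra_simps power2_eq_square; simp add: field_simps)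
  show "(a1 - a2) * f = L * (a1 + a2)"
    using tts[where p = "(False, 2)" and q = "(True, 1)" and r = "(True, 2)"]
    by (simp add: ev algebra_simps)
  show "(a1 - a2) * f = M * (a1 + a2)"
    using tss[where p = "(False, 2)" and q = "(True, 2)" and r = "(False, 1)"]
    by (simp add: ev algebra_simps)
qed

lemma coefficient_equations_solution:
  fixes g a1 a2 f L M :: "'k::field_char_0"
  assumes LM: "L * M = 0" and Lg: "L * g = 0" and Mg: "M * g = 0" and g: "g * (a1 - a2) = 0"
    and a1: "a1\<^sup>2 = 1/4 + g * f + L * g" and a2: "a2\<^sup>2 = 1/4 + g * f - L * g"
    and fL: "(a1 - a2) * f = L * (a1 + a2)" and fM: "(a1 - a2) * f = M * (a1 + a2)"
  shows "L = 0 \<and> M = 0 \<and> a2 = a1 \<and> a1\<^sup>2 = 1/4 + g * f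
    \<or> L * M = 0 \<and> g = 0 \<and> f = 0 \<and> a2 = - a1 \<and> (2 * a1 = 1 \<or> 2 * a1 = -1)"
proof (cases "a2 = a1")
  case True
  have "L * a1 = 0" "M * a1 = 0"
    using fL fM by (simp_all add: True)
  moreover have "a1 \<noteq> 0 \<or> g \<noteq> 0"
    using a1 by auto
  ultimately have "L = 0" "M = 0"
    using Lg Mg by auto
  then show ?thesis
    using True a1 by simp
next
  case False
  have g0: "g = 0"
    using g False by simp
  have "(a1 - a2) * (a1 + a2) = a1\<^sup>2 - a2\<^sup>2"
    by (simp add: algebra_simps power2_eq_square)
  also have "\<dots> = 0"
    using a1 a2 by (simp only: g0 mult_zero_left mult_zero_right add_0_right diff_0_right diff_self)
  finally have "(a1 - a2) * (a1 + a2) = 0" .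
  then have a2: "a2 = - a1"
    using False by (simp add: eq_neg_iff_add_eq_0 add.commute)
  have "(a1 - a2) * f = 0"
    using fL by (simp add: a2)
  then have "f = 0"
    using False by simp
  moreover have "(2 * a1 - 1) * (2 * a1 + 1) = 0"
    using a1 by (simp add: g0 algebra_simps power2_eq_square)
  ultimately show ?thesis
    using LM g0 a2 by (auto simp: eq_neg_iff_add_eq_0)
qed

lemma tensor_sum_ts_eq:
  "tensor_sum [(g, (False, 0), (True, 0)), (a1, (False, 2), (True, 0)), (a2, (False, 0), (True, 2)),
      (f, (False, 2), (True, 2)), (0, (False, 4), (True, 0)), (0, (False, 0), (True, 4))] =
    (\<lambda>x. g * tens2 qe2 qe1 x + f * tens2 (pmul qs qt) (pmul qt qs) x
      + a1 * tens2 (pmul qs qt) qe1 x + a2 * tens2 qe2 (pmul qt qs) x)"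
  by (auto simp: fun_eq_iff tensor_sum_def tens2_def qt_def qs_def qe1_def qe2_def pmul_bas_bas bas_apply)

lemma tensor_sum_self_bracket_eq:
  "tensor_sum [(L, (True, 3), (True, 1)), (- L, (True, 1), (True, 3))] =
    (\<lambda>x. L * (tens2 (pmul (pmul qt qs) qt) qt x - tens2 qt (pmul (pmul qt qs) qt) x))"
  "tensor_sum [(L, (False, 3), (False, 1)), (- L, (False, 1), (False, 3))] =
    (\<lambda>x. L * (tens2 (pmul (pmul qs qt) qs) qs x - tens2 qs (pmul (pmul qs qt) qs) x))"
  by (auto simp: fun_eq_iff tensor_sum_def tens2_def qt_def qs_def pmul_bas_bas bas_apply algebra_simps)

lemma quasi_Poisson_bracket_cases [consumes 2]:
  fixes br :: "'k::field_char_0 dbr"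
  assumes qp: "quasi_Poisson br" and deg: "deg_le4_on_gens br"
  obtains (loops_vanish) \<alpha> \<gamma> \<phi> where "br qs qs = (\<lambda>x. 0)" "br qt qt = (\<lambda>x. 0)"
      "\<alpha>\<^sup>2 = 1/4 + \<gamma> * \<phi>"
      "br qt qs = (\<lambda>x. \<gamma> * tens2 qe2 qe1 x + \<phi> * tens2 (pmul qs qt) (pmul qt qs) x
        + \<alpha> * (tens2 (pmul qs qt) qe1 x + tens2 qe2 (pmul qt qs) x))"
  | (signed) \<delta> L M where "\<delta> = 1 \<or> \<delta> = -1" "L * M = 0"
      "br qt qs = (\<lambda>x. (\<delta>/2) * (tens2 (pmul qs qt) qe1 x - tens2 qe2 (pmul qt qs) x))"
      "br qt qt = (\<lambda>x. L * (tens2 (pmul (pmul qt qs) qt) qt x - tens2 qt (pmul (pmul qt qs) qt) x))"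
      "br qs qs = (\<lambda>x. M * (tens2 (pmul (pmul qs qt) qs) qs x - tens2 qs (pmul (pmul qs qt) qs) x))"
proof -
  have db: "double_bracket br"
    using qp by (simp add: quasi_Poisson_def)
  obtain g a1 a2 f b1 b2 where ts: "br qt qs = tensor_sum [(g, (False, 0), (True, 0)),
      (a1, (False, 2), (True, 0)), (a2, (False, 0), (True, 2)), (f, (False, 2), (True, 2)),
      (b1, (False, 4), (True, 0)), (b2, (False, 0), (True, 4))]"
    using bracket_ts_normal_form[OF db deg_le4_on_gensD(1)[OF deg]] by blast
  obtain L where tt: "br qt qt = tensor_sum [(L, (True, 3), (True, 1)), (- L, (True, 1), (True, 3))]"
    using bracket_self_normal_form[OF db, of True, folded qt_def, OF deg_le4_on_gensD(2)[OF deg]]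
    by blast
  obtain M where ss: "br qs qs = tensor_sum [(M, (False, 3), (False, 1)), (- M, (False, 1), (False, 3))]"
    using bracket_self_normal_form[OF db, of False, folded qs_def, OF deg_le4_on_gensD(3)[OF deg]]
    by blast
  note eqs = quasi_Poisson_coefficient_equations[OF qp ts tt ss]
  note ts' = ts[unfolded eqs(1,2) tensor_sum_ts_eq]
    and tt' = tt[unfolded tensor_sum_self_bracket_eq] and ss' = ss[unfolded tensor_sum_self_bracket_eq]
  from coefficient_equations_solution[OF eqs(3-10)]
  consider "L = 0" "M = 0" "a2 = a1" "a1\<^sup>2 = 1/4 + g * f"
    | "L * M = 0" "g = 0" "f = 0" "a2 = - a1" "2 * a1 = 1 \<or> 2 * a1 = -1"
    by blast
  then show thesis
  proof cases
    case 1
    then show thesis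
      using ts' tt' ss' by (intro loops_vanish[of a1 g f]) (simp_all add: algebra_simps)
  next
    case 2
    then show thesis
      using ts' tt' ss' by (intro signed[of "2 * a1" L M]) (simp_all add: algebra_simps)
  qed
qed

theorem proposition4p4:
  fixes br :: "'k::field_char_0 dbr"
  assumes "quasi_Poisson br" and "deg_le4_on_gens br"
  shows "(br qs qs = (\<lambda>x. 0) \<and> br qt qt = (\<lambda>x. 0) \<and>
           ((\<exists>\<delta>. (\<delta> = 1 \<or> \<delta> = -1) \<and>
              br qt qs = (\<lambda>x. (\<delta>/2) * (tens2 (pmul qs qt) qe1 x - tens2 qe2 (pmul qt qs) x)))
          \<or> (\<exists>\<alpha> \<gamma> \<phi>. \<alpha>^2 = 1/4 + \<gamma> * \<phi> \<and>
              br qt qs = (\<lambda>x. \<gamma> * tens2 qe2 qe1 x + \<phi> * tens2 (pmul qs qt) (pmul qt qs) x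
                 + \<alpha> * (tens2 (pmul qs qt) qe1 x + tens2 qe2 (pmul qt qs) x)))))
       \<or> (br qs qs = (\<lambda>x. 0) \<and>
          (\<exists>lam. lam \<noteq> 0 \<and> br qt qt = (\<lambda>x. lam * (tens2 (pmul (pmul qt qs) qt) qt x
                                              - tens2 qt (pmul (pmul qt qs) qt) x))) \<and>
          (\<exists>\<delta>. (\<delta> = 1 \<or> \<delta> = -1) \<and>
              br qt qs = (\<lambda>x. (\<delta>/2) * (tens2 (pmul qs qt) qe1 x - tens2 qe2 (pmul qt qs) x))))
       \<or> (br qt qt = (\<lambda>x. 0) \<and>
          (\<exists>lam. lam \<noteq> 0 \<and> br qs qs = (\<lambda>x. lam * (tens2 (pmul (pmul qs qt) qs) qs x
                                              - tens2 qs (pmul (pmul qs qt) qs) x))) \<and>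
          (\<exists>\<delta>. (\<delta> = 1 \<or> \<delta> = -1) \<and>
              br qt qs = (\<lambda>x. (\<delta>/2) * (tens2 (pmul qs qt) qe1 x - tens2 qe2 (pmul qt qs) x))))"
  using assms
proof (cases rule: quasi_Poisson_bracket_cases)
  case loops_vanish
  then show ?thesis
    by blast
next
  case (signed \<delta> L M)
  have "L = 0 \<Longrightarrow> br qt qt = (\<lambda>x. 0)" and "M = 0 \<Longrightarrow> br qs qs = (\<lambda>x. 0)"
    using signed(4,5) by simp_all
  moreover from \<open>L * M = 0\<close> consider "L = 0" "M = 0" | "L \<noteq> 0" "M = 0" | "L = 0" "M \<noteq> 0"
    by auto
  ultimately show ?thesis
    by cases (use signed in blast)+
qed

end
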